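(* Let $\pi\in\mathfrak{S}_n$ have disjoint cycles of lengths $\ell_1,\dots,\ell_m$ (fixed points included). In $\textsf{Star}(n)$, the number of elements covered by $\pi$ is $\sum_{1\le i<j\le m}\ell_i\ell_j$, and the number of elements covering $\pi$ is $\sum_{i=1}^m\binom{\ell_i}{2}$.
   Context: $\mathfrak{S}_n$ is the symmetric group on $[n]$, products taken right to left. For a pivot $k\in[n]$, a star factorization of $\pi$ is $\pi=g_1\cdots g_r$ with each $g_i$ a transposition $(k\ i)$, $i\neq k$; it is transitive if all $(k\ i)$, $i\in[n]\setminus\{k\}$, occur; $\star_k(\pi)$ is the set of transitive star factorizations of $\pi$ of minimum length $n+m-2$ ($m$ = number of cycles of $\pi$). $\sigma\preceq_k\pi$ means some $\gamma\in\star_k(\sigma)$ is a not necessarily contiguous subword of some $\delta\in\star_k(\pi)$. This relation does not depend on $k$; it is denoted $\preceq$, and $\textsf{Star}(n)$ is the resulting poset on $\mathfrak{S}_n$. $\tau$ covers $\sigma$ if $\sigma\preceq\tau$, $\sigma\neq\tau$, and there is no $\rho\notin\{\sigma,\tau\}$ with $\sigma\preceq\rho\preceq\tau$. *)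

theory Defs
  imports "HOL-Combinatorics.Combinatorics" "HOL-Library.Sublist" "HOL-Library.Multiset"
begin

(* Permutations of [n] = {1..n} are functions nat => nat with  p permutes {1..n}.
   Products are function composition (right to left): (g1 o g2) x = g1 (g2 x). *)

(* product g_1 ... g_r of the star transpositions (k i_1) ... (k i_r) encoded by the word [i_1,...,i_r] *)
definition star_prod :: "nat \<Rightarrow> nat list \<Rightarrow> (nat \<Rightarrow> nat)" where
  "star_prod k w = foldr (\<lambda>i f. transpose k i \<circ> f) w id"

definition cycles_of :: "nat \<Rightarrow> (nat \<Rightarrow> nat) \<Rightarrow> nat set set" where
  "cycles_of n p = (\<lambda>x. {(p ^^ j) x | j. True}) ` {1..n}"

definition num_cycles :: "nat \<Rightarrow> (nat \<Rightarrow> nat) \<Rightarrow> nat" where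
  "num_cycles n p = card (cycles_of n p)"

(* star_k(p): transitive star factorizations of p with pivot k of minimum length n + m - 2 *)
definition star_facts :: "nat \<Rightarrow> nat \<Rightarrow> (nat \<Rightarrow> nat) \<Rightarrow> nat list set" where
  "star_facts n k p = {w. star_prod k w = p
                          \<and> set w = {1..n} - {k}
                          \<and> length w = n + num_cycles n p - 2}"

definition star_le :: "nat \<Rightarrow> nat \<Rightarrow> (nat \<Rightarrow> nat) \<Rightarrow> (nat \<Rightarrow> nat) \<Rightarrow> bool" where
  "star_le n k \<sigma> \<pi> \<longleftrightarrow> (\<exists>\<gamma>\<in>star_facts n k \<sigma>. \<exists>\<delta>\<in>star_facts n k \<pi>. subseq \<gamma> \<delta>)"

definition star_covers :: "nat \<Rightarrow> nat \<Rightarrow> (nat \<Rightarrow> nat) \<Rightarrow> (nat \<Rightarrow> nat) \<Rightarrow> bool" where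
  "star_covers n k \<sigma> \<tau> \<longleftrightarrow>
     \<sigma> permutes {1..n} \<and> \<tau> permutes {1..n} \<and> star_le n k \<sigma> \<tau> \<and> \<sigma> \<noteq> \<tau> \<and>
     \<not> (\<exists>\<rho>. \<rho> permutes {1..n} \<and> \<rho> \<notin> {\<sigma>, \<tau>} \<and> star_le n k \<sigma> \<rho> \<and> star_le n k \<rho> \<tau>)"

end

theory Submission
  imports Defs
begin

text \<open>
  Two facts drive everything. First, deleting or inserting a letter in a star word multiplies its
  product on the right by a transposition: with \<open>P\<close> the product of the suffix \<open>B\<close>,
  \<open>(k i) P = P (P\<inverse>k P\<inverse>i)\<close>, so the word \<open>A i B\<close> gives \<open>(A B)(P\<inverse>k P\<inverse>i)\<close>.
  Second, \<open>p \<mapsto> p (a b)\<close> splits the cycle of \<open>p\<close> through \<open>a\<close> and \<open>b\<close> if they lie in the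
  same cycle and merges their cycles otherwise, so the number of cycles changes by one.
  Since a transitive star word for a permutation with \<open>m\<close> cycles has length at least
  \<open>n + m - 2\<close>, removing a letter from a minimal word and keeping it minimal forces a merge, and
  every split can be realised by inserting a letter. Hence \<open>\<tau>\<close> covers \<open>\<sigma>\<close> iff
  \<open>\<tau> = \<sigma> (a b)\<close> with one more cycle: the permutations covered by \<open>\<pi>\<close> correspond to the pairs
  \<open>{a, b}\<close> in different cycles of \<open>\<pi>\<close>, those covering \<open>\<pi>\<close> to the pairs within one cycle.
\<close>

section \<open>Star products\<close>

lemma star_prod_Nil [simp]: "star_prod k [] = id"
  by (simp add: star_prod_def)

lemma star_prod_Cons [simp]: "star_prod k (i # w) = transpose k i \<circ> star_prod k w"
  by (simp add: star_prod_def)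

lemma star_prod_append: "star_prod k (u @ v) = star_prod k u \<circ> star_prod k v"
  by (induction u) (auto simp: comp_assoc)

lemma bij_star_prod: "bij (star_prod k w)"
  by (induction w) (simp_all only: star_prod_Nil star_prod_Cons bij_id bij_transpose bij_comp)

lemma star_prod_permutes:
  assumes "k \<in> S" "set w \<subseteq> S" shows "star_prod k w permutes S"
  using assms(2) by (induction w) (auto intro: permutes_compose permutes_swap_id assms(1))

lemma star_prod_fixes:
  assumes "x \<notin> insert k (set w)" shows "star_prod k w x = x"
  using assms by (induction w) auto

lemma star_prod_insert:
  "star_prod k (A @ i # B) =
     star_prod k (A @ B) \<circ> transpose (inv (star_prod k B) k) (inv (star_prod k B) i)"
  by (simp add: star_prod_append comp_assoc transpose_comp_eq[OF bij_star_prod])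

lemma star_prod_suffix_to_pivot:
  assumes "x \<in> insert k (set w)"
  obtains A B where "w = A @ B" "star_prod k B x = k"
proof (cases "x = k")
  case True
  then show ?thesis using that[of w "[]"] by simp
next
  case False
  then obtain A B where "w = A @ x # B" "x \<notin> set B"
    using assms split_list_last[of x w] by auto
  moreover have "star_prod k (x # B) x = k" using star_prod_fixes[of x k B] False calculation by simp
  ultimately show ?thesis using that by blast
qed

lemma set_subseq: "subseq xs ys \<Longrightarrow> set xs \<subseteq> set ys"
  by (metis subseq_conv_nths set_nths_subset)

lemma subseq_insert: "subseq (A @ B) (A @ i # B)"
proof -
  have "subseq B (i # B)" by (rule list_emb.list_emb_Cons) (rule list_emb_refl, simp)
  then show ?thesis by (simp add: subseq_append')
qed

lemma subseq_remove_one: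
  "subseq xs ys \<Longrightarrow> xs \<noteq> ys \<Longrightarrow> \<exists>A i B. ys = A @ i # B \<and> subseq xs (A @ B)"
proof (induction ys arbitrary: xs)
  case Nil then show ?case by simp
next
  case (Cons y ys)
  show ?case
  proof (cases "xs \<noteq> [] \<and> hd xs = y")
    case True
    then obtain xs' where xs: "xs = y # xs'" by (cases xs) auto
    then have "subseq xs' ys" "xs' \<noteq> ys" using Cons.prems by auto
    then obtain A i B where "ys = A @ i # B" "subseq xs' (A @ B)" using Cons.IH by blast
    then show ?thesis using xs by (intro exI[of _ "y # A"]) auto
  next
    case False
    then have "subseq xs ys" using Cons.prems by (cases xs) auto
    then show ?thesis by (intro exI[of _ "[]"]) auto
  qed
qed


section \<open>Orbits of p \<circ> transpose a b\<close>

lemma orbit_eq_of_mem: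
  assumes "permutation p" "y \<in> orbit p x" shows "orbit p y = orbit p x"
  using orbit_cyclic_eq3[OF cyclic_on_orbit'[OF assms(1)] assms(2)] .

lemma orbit_sym:
  assumes "permutation p" shows "b \<in> orbit p a \<longleftrightarrow> a \<in> orbit p b"
  using orbit_swap[OF permutation_self_in_orbit[OF assms]] by blast

lemma orbits_disjoint:
  assumes perm: "permutation p" and "y \<notin> orbit p x" shows "orbit p y \<inter> orbit p x = {}"
proof (rule ccontr)
  assume "orbit p y \<inter> orbit p x \<noteq> {}"
  then obtain z where "z \<in> orbit p y" "z \<in> orbit p x" by blast
  then have "orbit p y = orbit p x" using orbit_eq_of_mem[OF perm] by metis
  then show False using assms(2) permutation_self_in_orbit[OF perm, of y] by simp
qed

lemma funpow_eq_along_trajectory: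
  assumes "\<And>i. i < j \<Longrightarrow> f ((g ^^ i) x) = g ((g ^^ i) x)"
  shows "(f ^^ j) x = (g ^^ j) x"
  using assms by (induction j) auto

lemma orbit_subset_of_closed:
  assumes "x \<in> S" "\<And>y. y \<in> S \<Longrightarrow> f y \<in> S" shows "orbit f x \<subseteq> S"
proof
  fix y assume "y \<in> orbit f x" then show "y \<in> S" by induction (use assms in auto)
qed

text \<open>
  With \<open>b = p\<^sup>m a\<close> on the cycle \<open>a, p a, \<dots>, p\<^sup>L\<^sup>-\<^sup>1 a\<close> of \<open>p\<close>, the product
  \<open>p \<circ> transpose a b\<close> sends \<open>a\<close> along \<open>p\<^sup>m\<^sup>+\<^sup>1 a, \<dots>, p\<^sup>L\<^sup>-\<^sup>1 a\<close> back to \<open>a\<close>, and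
  \<open>b\<close> along \<open>p a, \<dots>, p\<^sup>m\<^sup>-\<^sup>1 a\<close> back to \<open>b\<close>: the cycle is cut in two.
\<close>

lemma comp_transpose_trajectories:
  fixes p :: "'a \<Rightarrow> 'a"
  assumes perm: "permutation p" and ab: "a \<noteq> b" "b \<in> orbit p a"
  defines "q \<equiv> p \<circ> transpose a b"
  obtains m L where "0 < m" "m < L" "b = (p ^^ m) a" "(p ^^ L) a = a"
    "inj_on (\<lambda>j. (p ^^ j) a) {0..<L}" "orbit p a = (\<lambda>j. (p ^^ j) a) ` {0..<L}"
    "\<And>i. Suc m + i \<le> L \<Longrightarrow> (q ^^ i) (q a) = (p ^^ (Suc m + i)) a"
    "\<And>i. i < m \<Longrightarrow> (q ^^ i) (q b) = (p ^^ Suc i) a"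
proof -
  define L where "L = least_power p a"
  define E where "E = (\<lambda>j. (p ^^ j) a)"
  have E_shift: "(p ^^ i) (E j) = E (i + j)" for i j by (simp add: E_def funpow_add)
  have E_Suc: "p (E j) = E (Suc j)" for j by (simp add: E_def)
  have L: "E L = a" "E 0 = a" "L > 0"
    using least_power_of_permutation[OF perm] by (auto simp: L_def E_def)
  have "distinct (map E [0..<L])" using cycle_of_permutation[OF perm, of a] by (simp add: E_def L_def)
  then have inj: "inj_on E {0..<L}" by (simp add: distinct_map)
  have orb: "orbit p a = E ` {0..<L}"
    using orbit_altdef_bounded[where f=p and n=L and s=a] L by (auto simp: E_def)
  obtain m where m: "b = E m" "m < L" using ab(2) orb by auto
  have "m \<noteq> 0" by (metis m(1) ab(1) L(2))
  have q_E: "q (E j) = E (Suc j)" if "0 < j" "j < L" "j \<noteq> m" for j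
  proof -
    have "E j \<noteq> a" "E j \<noteq> b"
      using that inj_onD[OF inj, of j 0] inj_onD[OF inj, of j m] m L by auto
    then show ?thesis by (simp add: q_def E_Suc)
  qed
  have traj_a: "(q ^^ i) (q a) = E (Suc m + i)" if "Suc m + i \<le> L" for i
  proof -
    have "q a = E (Suc m)" using m by (simp add: q_def E_Suc)
    moreover have "(q ^^ i) (E (Suc m)) = (p ^^ i) (E (Suc m))"
      using that \<open>m \<noteq> 0\<close> by (intro funpow_eq_along_trajectory) (simp add: E_shift E_Suc q_E)
    ultimately show ?thesis by (simp add: E_shift add.commute)
  qed
  have traj_b: "(q ^^ i) (q b) = E (Suc i)" if "i < m" for i
  proof -
    have "q b = E 1" using E_Suc[of 0] L(2) by (simp add: q_def)
    moreover have "(q ^^ i) (E 1) = (p ^^ i) (E 1)"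
      using that m by (intro funpow_eq_along_trajectory) (simp add: E_shift E_Suc q_E)
    ultimately show ?thesis by (simp add: E_shift)
  qed
  show ?thesis
    using \<open>m \<noteq> 0\<close>[unfolded neq0_conv] m(2) m(1)[unfolded E_def] L(1)[unfolded E_def]
      inj[unfolded E_def] orb[unfolded E_def] traj_a[unfolded E_def] traj_b[unfolded E_def]
    by (rule that)
qed

lemma orbit_comp_transpose_split_not_mem:
  fixes p :: "'a \<Rightarrow> 'a"
  assumes perm: "permutation p" and ab: "a \<noteq> b" "b \<in> orbit p a"
  shows "b \<notin> orbit (p \<circ> transpose a b) a"
proof
  define q where "q = p \<circ> transpose a b"
  obtain m L where m: "0 < m" "m < L" "b = (p ^^ m) a" "(p ^^ L) a = a"
    and inj: "inj_on (\<lambda>j. (p ^^ j) a) {0..<L}" and "orbit p a = (\<lambda>j. (p ^^ j) a) ` {0..<L}"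
    and traj: "\<And>i. Suc m + i \<le> L \<Longrightarrow> (q ^^ i) (q a) = (p ^^ (Suc m + i)) a"
    and "\<And>i. i < m \<Longrightarrow> (q ^^ i) (q b) = (p ^^ Suc i) a"
    using comp_transpose_trajectories[OF assms, folded q_def] by blast
  have "L - m = Suc (L - Suc m)" using m by simp
  then have "(q ^^ (L - m)) a = (q ^^ (L - Suc m)) (q a)" by (simp add: funpow_swap1)
  also have "\<dots> = a" using traj[of "L - Suc m"] m by simp
  finally have "(q ^^ (L - m)) a = a" .
  then have orb_q: "orbit q a = {(q ^^ j) a | j. j < L - m}"
    using m by (intro orbit_altdef_bounded) auto
  assume "b \<in> orbit (p \<circ> transpose a b) a"
  then obtain j where j: "b = (q ^^ j) a" "j < L - m" unfolding q_def[symmetric] orb_q by blast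
  show False
  proof (cases j)
    case 0 then show False using j ab by simp
  next
    case (Suc i)
    then have "(p ^^ (Suc m + i)) a = (p ^^ m) a" using j traj[of i] m by (simp add: funpow_swap1)
    then show False using inj_onD[OF inj] j m Suc by fastforce
  qed
qed

lemma orbit_comp_transpose_split_Un:
  fixes p :: "'a \<Rightarrow> 'a"
  assumes perm: "permutation p" and ab: "a \<noteq> b" "b \<in> orbit p a"
  shows "orbit (p \<circ> transpose a b) a \<union> orbit (p \<circ> transpose a b) b = orbit p a"
proof -
  define q where "q = p \<circ> transpose a b"
  obtain m L where m: "0 < m" "m < L" "b = (p ^^ m) a" "(p ^^ L) a = a"
    and "inj_on (\<lambda>j. (p ^^ j) a) {0..<L}" and orb: "orbit p a = (\<lambda>j. (p ^^ j) a) ` {0..<L}"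
    and traj_a: "\<And>i. Suc m + i \<le> L \<Longrightarrow> (q ^^ i) (q a) = (p ^^ (Suc m + i)) a"
    and traj_b: "\<And>i. i < m \<Longrightarrow> (q ^^ i) (q b) = (p ^^ Suc i) a"
    using comp_transpose_trajectories[OF assms, folded q_def] by blast
  have perm_q: "permutation q"
    unfolding q_def using perm by (simp add: permutation_compose permutation_swap_id)
  have "orbit p a \<subseteq> orbit q a \<union> orbit q b"
  proof
    fix x assume "x \<in> orbit p a"
    then obtain j where x: "x = (p ^^ j) a" "j < L" by (auto simp: orb)
    consider "j = 0" | "0 < j" "j \<le> m" | "m < j" by linarith
    then show "x \<in> orbit q a \<union> orbit q b"
    proof cases
      case 1 then show ?thesis using x permutation_self_in_orbit[OF perm_q] by simp
    next
      case 2
      then have "x = (q ^^ (j - 1)) (q b)" using x traj_b[of "j - 1"] by simp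
      then show ?thesis using funpow_in_orbit[OF orbit.base[where f=q and x=b]] by blast
    next
      case 3
      then have "x = (q ^^ (j - Suc m)) (q a)" using x traj_a[of "j - Suc m"] by simp
      then show ?thesis using funpow_in_orbit[OF orbit.base[where f=q and x=a]] by blast
    qed
  qed
  moreover have "orbit q x \<subseteq> orbit p a" if "x \<in> orbit p a" for x
  proof (rule orbit_subset_of_closed[OF that])
    fix y assume y: "y \<in> orbit p a"
    have "a \<in> orbit p a" by (rule permutation_self_in_orbit[OF perm])
    with y ab(2) have "transpose a b y \<in> orbit p a" by (auto simp: transpose_def)
    then show "q y \<in> orbit p a" by (auto simp: q_def intro: orbit_trans orbit.base)
  qed
  ultimately show ?thesis
    unfolding q_def[symmetric] using ab(2) permutation_self_in_orbit[OF perm] by blast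
qed

lemma orbit_comp_transpose_outside:
  fixes p :: "'a \<Rightarrow> 'a"
  assumes perm: "permutation p" and "b \<in> orbit p a" and x: "x \<notin> orbit p a"
  shows "orbit (p \<circ> transpose a b) x = orbit p x"
proof -
  have "(p ^^ i) x \<in> orbit p x" for i
    by (rule funpow_in_orbit[OF permutation_self_in_orbit[OF perm]])
  then have "(p ^^ i) x \<notin> orbit p a" for i
    using x orbit_eq_of_mem[OF perm] permutation_self_in_orbit[OF perm, of x] by metis
  then have "(p ^^ i) x \<noteq> a" "(p ^^ i) x \<noteq> b" for i
    using assms(2) permutation_self_in_orbit[OF perm] by metis+
  then have "((p \<circ> transpose a b) ^^ i) x = (p ^^ i) x" for i
    by (intro funpow_eq_along_trajectory) simp
  moreover have "permutation (p \<circ> transpose a b)"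
    using perm by (simp add: permutation_compose permutation_swap_id)
  ultimately show ?thesis by (simp add: orbit_altdef_permutation perm)
qed

lemma orbit_comp_transpose_merge:
  fixes p :: "'a \<Rightarrow> 'a"
  assumes perm: "permutation p" and "a \<noteq> b" "b \<notin> orbit p a"
  shows "b \<in> orbit (p \<circ> transpose a b) a"
proof -
  define q where "q = p \<circ> transpose a b"
  define L where "L = least_power p b"
  have L: "(p ^^ L) b = b" "L > 0" using least_power_of_permutation[OF perm] by (auto simp: L_def)
  have "(p ^^ i) (p b) \<in> orbit p b" for i by (rule funpow_in_orbit[OF orbit.base])
  then have "(p ^^ i) (p b) \<noteq> a" for i
    using assms(3) orbit_eq_of_mem[OF perm] permutation_self_in_orbit[OF perm] by metis
  moreover have "(p ^^ i) (p b) \<noteq> b" if "Suc i < L" for i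
    using least_power_le[where f=p and n="Suc i" and x=b] that by (auto simp: L_def funpow_swap1)
  ultimately have traj: "(q ^^ i) (p b) = (p ^^ i) (p b)" if "Suc i \<le> L" for i
    using that by (intro funpow_eq_along_trajectory) (auto simp: q_def funpow_swap1)
  have L_Suc: "L = Suc (L - 1)" using L by simp
  then have "(q ^^ L) a = (q ^^ (L - 1)) (q a)" by (metis funpow_Suc_right o_apply)
  also have "\<dots> = (p ^^ (L - 1)) (p b)" using traj[of "L - 1"] L by (simp add: q_def)
  also have "\<dots> = (p ^^ L) b" using L_Suc by (metis funpow_Suc_right o_apply)
  finally have "(q ^^ L) a = b" using L by simp
  then show ?thesis using L(2) unfolding q_def[symmetric] orbit_altdef by blast
qed


section \<open>Counting cycles\<close>

lemma cycles_of_eq_orbits: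
  assumes "p permutes {1..n}" shows "cycles_of n p = orbit p ` {1..n}"
proof -
  have "permutation p" using assms by (auto simp: permutation_permutes)
  then show ?thesis unfolding cycles_of_def by (simp add: orbit_altdef_permutation)
qed

lemma cycles_of_disjoint:
  assumes p: "p permutes {1..n}" and "C \<in> cycles_of n p" "C' \<in> cycles_of n p" "C \<noteq> C'"
  shows "C \<inter> C' = {}"
proof -
  have perm: "permutation p" using p by (auto simp: permutation_permutes)
  obtain x y where xy: "C = orbit p x" "C' = orbit p y"
    using assms(2,3) by (auto simp: cycles_of_eq_orbits[OF p])
  then have "x \<notin> orbit p y" using assms(4) orbit_eq_of_mem[OF perm] by metis
  then show ?thesis using orbits_disjoint[OF perm] xy by blast
qed

lemma Union_cycles_of:
  assumes p: "p permutes {1..n}" shows "\<Union>(cycles_of n p) = {1..n}"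
proof -
  have "permutation p" using p by (auto simp: permutation_permutes)
  then have "x \<in> orbit p x" for x by (rule permutation_self_in_orbit)
  moreover have "orbit p x \<subseteq> {1..n}" if "x \<in> {1..n}" for x using permutes_orbit_subset[OF p that] .
  ultimately show ?thesis unfolding cycles_of_eq_orbits[OF p] by blast
qed

lemma finite_cycle:
  assumes "p permutes {1..n}" "C \<in> cycles_of n p" shows "finite C"
  using Union_cycles_of[OF assms(1)] assms(2) finite_subset[of C "{1..n}"] by blast

lemma sum_card_cycles_of:
  assumes p: "p permutes {1..n}" shows "(\<Sum>C\<in>cycles_of n p. card C) = n"
proof -
  have "(\<Sum>C\<in>cycles_of n p. card C) = card (\<Union>(cycles_of n p))"
    using cycles_of_disjoint[OF p] finite_cycle[OF p]
    by (intro card_Union_disjoint[symmetric]) (auto simp: pairwise_def disjnt_def)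
  then show ?thesis using Union_cycles_of[OF p] by simp
qed

lemma num_cycles_comp_transpose_split:
  assumes p: "p permutes {1..n}" and ab: "a \<in> {1..n}" "b \<in> {1..n}" "a \<noteq> b" "b \<in> orbit p a"
  shows "num_cycles n (p \<circ> transpose a b) = num_cycles n p + 1"
proof -
  define C where "C = orbit p a"
  define q where "q = p \<circ> transpose a b"
  define R where "R = orbit p ` ({1..n} - C)"
  have perm: "permutation p" using p by (auto simp: permutation_permutes)
  have q: "q permutes {1..n}" unfolding q_def using p ab by (intro permutes_compose permutes_swap_id)
  have perm_q: "permutation q" using q by (auto simp: permutation_permutes)
  have C: "C \<subseteq> {1..n}" "a \<in> C" "b \<in> C"
    using permutes_orbit_subset[OF p ab(1)] permutation_self_in_orbit[OF perm] ab(4)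
    by (auto simp: C_def)
  have split: "b \<notin> orbit q a" "orbit q a \<union> orbit q b = C"
    unfolding q_def C_def
    using orbit_comp_transpose_split_not_mem[OF perm ab(3,4)] orbit_comp_transpose_split_Un[OF perm ab(3,4)]
    by simp_all
  have S_split: "{1..n} = C \<union> ({1..n} - C)" using C(1) by blast
  have "orbit p x = C" if "x \<in> C" for x using orbit_eq_of_mem[OF perm] that by (simp add: C_def)
  then have "orbit p ` C = (\<lambda>_. C) ` C" by (rule image_cong[OF refl])
  also have "\<dots> = {C}" using C(2) by (rule image_constant)
  finally have orbit_p_C: "orbit p ` C = {C}" .
  have "cycles_of n p = orbit p ` C \<union> R"
    unfolding cycles_of_eq_orbits[OF p] R_def by (subst S_split) (rule image_Un)
  then have cyc_p: "cycles_of n p = insert C R" using orbit_p_C by simp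
  have "orbit q x \<in> {orbit q a, orbit q b}" if "x \<in> C" for x
    using orbit_eq_of_mem[OF perm_q] that split(2) by blast
  then have orbit_q_C: "orbit q ` C = {orbit q a, orbit q b}" using C(2,3) by auto
  have "orbit q ` ({1..n} - C) = R"
    unfolding R_def q_def C_def using orbit_comp_transpose_outside[OF perm ab(4)] by simp
  then have "cycles_of n q = orbit q ` C \<union> R"
    unfolding cycles_of_eq_orbits[OF q] by (subst S_split) (simp only: image_Un)
  then have cyc_q: "cycles_of n q = insert (orbit q a) (insert (orbit q b) R)"
    using orbit_q_C by simp
  have "D \<inter> C = {}" if "D \<in> R" for D
    using that orbits_disjoint[OF perm] unfolding R_def C_def by blast
  moreover have "orbit q a \<noteq> {}" "orbit q b \<noteq> {}" "C \<noteq> {}" using C(2) by (auto simp: orbit_nonempty)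
  ultimately have "orbit q a \<notin> R" "orbit q b \<notin> R" "C \<notin> R" using split(2) by blast+
  moreover have "orbit q a \<noteq> orbit q b" using split(1) permutation_self_in_orbit[OF perm_q] by metis
  moreover have "finite R" by (simp add: R_def)
  ultimately show ?thesis unfolding num_cycles_def q_def[symmetric] cyc_p cyc_q by simp
qed

lemma num_cycles_comp_transpose_merge:
  assumes p: "p permutes {1..n}" and ab: "a \<in> {1..n}" "b \<in> {1..n}" "a \<noteq> b" "b \<notin> orbit p a"
  shows "num_cycles n p = num_cycles n (p \<circ> transpose a b) + 1"
proof -
  have q: "p \<circ> transpose a b permutes {1..n}" using p ab by (intro permutes_compose permutes_swap_id)
  have "permutation p" using p by (auto simp: permutation_permutes)
  from num_cycles_comp_transpose_split[OF q ab(1-3) orbit_comp_transpose_merge[OF this ab(3,4)]]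
  show ?thesis by (simp add: comp_assoc)
qed

lemma num_cycles_comp_transpose_le:
  assumes "p permutes {1..n}" "a \<in> {1..n}" "b \<in> {1..n}" "a \<noteq> b"
  shows "num_cycles n (p \<circ> transpose a b) \<le> num_cycles n p + 1"
  using num_cycles_comp_transpose_split[OF assms] num_cycles_comp_transpose_merge[OF assms]
  by (cases "b \<in> orbit p a") auto

lemma num_cycles_id: "num_cycles n id = n"
proof -
  have "cycles_of n id = (\<lambda>x. {x}) ` {1..n}" by (auto simp: cycles_of_def)
  then show ?thesis by (simp add: num_cycles_def card_image)
qed

lemma num_cycles_pos: "1 \<le> n \<Longrightarrow> 1 \<le> num_cycles n p"
  by (simp add: num_cycles_def cycles_of_def Suc_le_eq card_gt_0_iff)

lemma num_cycles_pivot: "k \<in> {1..n} \<Longrightarrow> 2 \<le> n + num_cycles n p"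
  using num_cycles_pos[of n p] by auto


section \<open>Minimal transitive star factorizations\<close>

lemma num_cycles_star_prod_le:
  assumes k: "k \<in> {1..n}" and w: "set w \<subseteq> {1..n} - {k}"
  shows "num_cycles n (star_prod k w) + 2 * card (set w) \<le> n + length w"
  using w
proof (induction w rule: rev_induct)
  case Nil then show ?case using num_cycles_id[of n] by (simp add: id_def)
next
  case (snoc i w)
  define p where "p = star_prod k w"
  have IH: "num_cycles n p + 2 * card (set w) \<le> n + length w" using snoc by (simp add: p_def)
  have i: "i \<in> {1..n}" "k \<noteq> i" using snoc.prems by auto
  have p: "p permutes {1..n}" unfolding p_def using k snoc.prems by (intro star_prod_permutes) auto
  have prod: "star_prod k (w @ [i]) = p \<circ> transpose k i" by (simp add: star_prod_append p_def)
  show ?case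
  proof (cases "i \<in> set w")
    case True
    then have set_eq: "set (w @ [i]) = set w" by auto
    show ?thesis using IH num_cycles_comp_transpose_le[OF p k i]
      unfolding prod set_eq length_append_singleton by linarith
  next
    case False
    \<comment> \<open>a new letter is a fixed point of \<open>p\<close>, so the transposition merges two cycles\<close>
    have "p i = i" unfolding p_def using False i by (intro star_prod_fixes) auto
    then have orbit_i: "orbit p i = {i}" by (simp add: orbit_eq_singleton_iff)
    have "i \<notin> orbit p k"
    proof
      assume i_in: "i \<in> orbit p k"
      have "permutation p" using p by (auto simp: permutation_permutes)
      then have "k \<in> orbit p i" using orbit_swap[OF permutation_self_in_orbit i_in] by blast
      then show False using orbit_i i(2) by simp
    qed
    then have "num_cycles n p = num_cycles n (p \<circ> transpose k i) + 1"
      using num_cycles_comp_transpose_merge[OF p k i(1,2)] by simp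
    moreover have card_eq: "card (set (w @ [i])) = Suc (card (set w))" using False by simp
    ultimately show ?thesis using IH unfolding prod card_eq length_append_singleton mult_Suc_right by linarith
  qed
qed

lemma star_facts_iff:
  assumes "k \<in> {1..n}"
  shows "w \<in> star_facts n k p \<longleftrightarrow>
           star_prod k w = p \<and> set w = {1..n} - {k} \<and> length w + 2 = n + num_cycles n p"
proof -
  have "length w = n + num_cycles n p - 2 \<longleftrightarrow> length w + 2 = n + num_cycles n p"
    using num_cycles_pivot[OF assms, of p] by arith
  then show ?thesis unfolding star_facts_def by simp
qed

lemma transitive_star_word_length_ge:
  assumes "k \<in> {1..n}" "set w = {1..n} - {k}"
  shows "n + num_cycles n (star_prod k w) \<le> length w + 2"
  using num_cycles_star_prod_le[of k n w] assms by (simp add: card_Diff_singleton)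

lemma star_le_num_cycles_less:
  assumes k: "k \<in> {1..n}" and "star_le n k \<sigma> \<rho>" "\<sigma> \<noteq> \<rho>"
  shows "num_cycles n \<sigma> < num_cycles n \<rho>"
proof -
  obtain \<gamma> \<delta> where \<gamma>: "\<gamma> \<in> star_facts n k \<sigma>" and \<delta>: "\<delta> \<in> star_facts n k \<rho>" and "subseq \<gamma> \<delta>"
    using assms(2) unfolding star_le_def by blast
  moreover have "\<gamma> \<noteq> \<delta>" using \<gamma> \<delta> assms(3) by (auto simp: star_facts_def)
  ultimately have "length \<gamma> < length \<delta>"
    using subseq_same_length[of \<gamma> \<delta>] list_emb_length[of _ \<gamma> \<delta>] by fastforce
  then show ?thesis using \<gamma> \<delta> by (simp add: star_facts_iff[OF k])
qed

lemma star_facts_insert: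
  assumes k: "k \<in> {1..n}" and \<gamma>: "\<gamma> \<in> star_facts n k \<sigma>"
    and ab: "a \<in> {1..n}" "b \<in> {1..n}" "a \<noteq> b"
    and cyc: "num_cycles n (\<sigma> \<circ> transpose a b) = num_cycles n \<sigma> + 1"
  shows "\<exists>\<delta>\<in>star_facts n k (\<sigma> \<circ> transpose a b). subseq \<gamma> \<delta>"
proof -
  have \<gamma>': "star_prod k \<gamma> = \<sigma>" "set \<gamma> = {1..n} - {k}" "length \<gamma> + 2 = n + num_cycles n \<sigma>"
    using \<gamma> by (simp_all add: star_facts_iff[OF k])
  obtain A B where AB: "\<gamma> = A @ B" "star_prod k B a = k"
    using star_prod_suffix_to_pivot[of a k \<gamma>] ab(1) \<gamma>'(2) by blast
  define P where "P = star_prod k B"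
  define i where "i = P b"
  have P: "P permutes {1..n}"
    unfolding P_def using k \<gamma>'(2) AB(1) by (intro star_prod_permutes) auto
  have Pa: "P a = k" using AB(2) by (simp add: P_def)
  have inv: "inv P k = a" "inv P i = b"
    using permutes_inverses(2)[OF P, of a] permutes_inverses(2)[OF P, of b] Pa
    by (simp_all add: i_def)
  have i: "i \<in> {1..n}" "i \<noteq> k"
    using permutes_in_image[OF P, of b] ab(2,3) Pa[symmetric]
    by (auto simp: i_def inj_eq[OF permutes_inj[OF P]])
  have "star_prod k (A @ i # B) = star_prod k \<gamma> \<circ> transpose a b"
    using star_prod_insert[of k A i B] unfolding P_def[symmetric] inv AB(1) .
  then have prod: "star_prod k (A @ i # B) = \<sigma> \<circ> transpose a b" by (simp only: \<gamma>'(1))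
  have "set (A @ i # B) = insert i (set \<gamma>)" using AB(1) by auto
  then have set: "set (A @ i # B) = {1..n} - {k}" using \<gamma>'(2) i by (simp add: insert_absorb)
  have len: "length (A @ i # B) + 2 = n + num_cycles n (\<sigma> \<circ> transpose a b)"
    using \<gamma>'(3) AB(1) cyc by simp
  have "A @ i # B \<in> star_facts n k (\<sigma> \<circ> transpose a b)"
    unfolding star_facts_iff[OF k] using prod set len by blast
  moreover have "subseq \<gamma> (A @ i # B)" using AB(1) by (simp add: subseq_insert)
  ultimately show ?thesis by blast
qed

lemma star_facts_remove_letter:
  assumes k: "k \<in> {1..n}" and \<delta>: "A @ i # B \<in> star_facts n k \<tau>"
    and set_AB: "set (A @ B) = {1..n} - {k}"
  obtains a b where "a \<in> {1..n}" "b \<in> {1..n}" "a \<noteq> b"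
    "num_cycles n \<tau> = num_cycles n (\<tau> \<circ> transpose a b) + 1"
    "A @ B \<in> star_facts n k (\<tau> \<circ> transpose a b)"
proof -
  have \<delta>': "star_prod k (A @ i # B) = \<tau>" "set (A @ i # B) = {1..n} - {k}"
    "length (A @ i # B) + 2 = n + num_cycles n \<tau>"
    using \<delta> by (simp_all add: star_facts_iff[OF k])
  have "i \<in> set (A @ i # B)" by simp
  then have i: "i \<in> {1..n} - {k}" unfolding \<delta>'(2) .
  define P where "P = star_prod k B"
  define a where "a = inv P k"
  define b where "b = inv P i"
  define \<rho> where "\<rho> = star_prod k (A @ B)"
  have P: "inv P permutes {1..n}"
    unfolding P_def using k \<delta>'(2) by (intro permutes_inv star_prod_permutes) auto
  have ab: "a \<in> {1..n}" "b \<in> {1..n}" "a \<noteq> b"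
    using k i permutes_in_image[OF P, of k] permutes_in_image[OF P, of i]
    by (simp_all add: a_def b_def inj_eq[OF permutes_inj[OF P]])
  have \<rho>: "\<rho> permutes {1..n}" unfolding \<rho>_def using k set_AB by (intro star_prod_permutes) auto
  have \<tau>: "\<tau> = \<rho> \<circ> transpose a b"
    using star_prod_insert[of k A i B]
    unfolding P_def[symmetric] a_def[symmetric] b_def[symmetric] \<rho>_def[symmetric] \<delta>'(1) .
  then have \<rho>_eq: "\<rho> = \<tau> \<circ> transpose a b"
    by (simp only: comp_assoc transpose_comp_involutory comp_id)
  \<comment> \<open>merging would make \<open>A @ B\<close> shorter than any transitive word for \<open>\<rho>\<close> can be\<close>
  have "b \<in> orbit \<rho> a"
  proof (rule ccontr)
    assume "b \<notin> orbit \<rho> a"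
    from num_cycles_comp_transpose_merge[OF \<rho> ab this] \<tau>
    have "num_cycles n \<rho> = num_cycles n \<tau> + 1" by simp
    moreover have "n + num_cycles n \<rho> \<le> length (A @ B) + 2"
      unfolding \<rho>_def using transitive_star_word_length_ge[OF k set_AB] .
    ultimately show False using \<delta>'(3) by simp
  qed
  then have cyc: "num_cycles n \<tau> = num_cycles n \<rho> + 1"
    using num_cycles_comp_transpose_split[OF \<rho> ab] \<tau> by simp
  have "A @ B \<in> star_facts n k \<rho>"
    unfolding star_facts_iff[OF k] using set_AB cyc \<delta>'(3) by (simp add: \<rho>_def)
  then show ?thesis using that[OF ab] cyc unfolding \<rho>_eq by blast
qed

lemma star_facts_delete:
  assumes k: "k \<in> {1..n}" and \<delta>: "\<delta> \<in> star_facts n k \<tau>"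
    and \<gamma>: "set \<gamma> = {1..n} - {k}" and sub: "subseq \<gamma> \<delta>" "\<gamma> \<noteq> \<delta>"
  obtains a b \<delta>' where "a \<in> {1..n}" "b \<in> {1..n}" "a \<noteq> b"
    "num_cycles n \<tau> = num_cycles n (\<tau> \<circ> transpose a b) + 1"
    "\<delta>' \<in> star_facts n k (\<tau> \<circ> transpose a b)" "subseq \<gamma> \<delta>'" "subseq \<delta>' \<delta>"
proof -
  obtain A i B where AiB: "\<delta> = A @ i # B" "subseq \<gamma> (A @ B)" using subseq_remove_one[OF sub] by blast
  have "set (A @ B) \<subseteq> set \<delta>" using AiB(1) by auto
  moreover have "set \<delta> = {1..n} - {k}" using \<delta> by (simp add: star_facts_def)
  ultimately have set_AB: "set (A @ B) = {1..n} - {k}" using set_subseq[OF AiB(2)] \<gamma> by blast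
  obtain a b where "a \<in> {1..n}" "b \<in> {1..n}" "a \<noteq> b"
    "num_cycles n \<tau> = num_cycles n (\<tau> \<circ> transpose a b) + 1"
    "A @ B \<in> star_facts n k (\<tau> \<circ> transpose a b)"
    using star_facts_remove_letter[OF k \<delta>[unfolded AiB(1)] set_AB] by blast
  moreover have "subseq (A @ B) \<delta>" using AiB(1) by (simp add: subseq_insert)
  ultimately show ?thesis using that AiB(2) by blast
qed

lemma cycle_of_list_snoc:
  assumes "distinct (k # xs @ [x])"
  shows "cycle_of_list (k # xs @ [x]) = transpose k x \<circ> cycle_of_list (k # xs)"
  using assms
proof (induction xs arbitrary: k)
  case Nil then show ?case by simp
next
  case (Cons y ys)
  have IH: "cycle_of_list (y # ys @ [x]) = transpose y x \<circ> cycle_of_list (y # ys)"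
    by (rule Cons.IH) (use Cons.prems in simp)
  have three_cycle: "transpose k y \<circ> transpose y x = transpose k x \<circ> transpose k y"
    using Cons.prems by (auto simp: fun_eq_iff transpose_def)
  have "cycle_of_list (k # (y # ys) @ [x]) = transpose k y \<circ> cycle_of_list (y # ys @ [x])"
    by simp
  also have "\<dots> = (transpose k y \<circ> transpose y x) \<circ> cycle_of_list (y # ys)"
    by (simp only: IH comp_assoc)
  also have "\<dots> = transpose k x \<circ> (transpose k y \<circ> cycle_of_list (y # ys))"
    by (simp only: three_cycle comp_assoc)
  also have "\<dots> = transpose k x \<circ> cycle_of_list (k # y # ys)" by simp
  finally show ?case .
qed

lemma star_prod_rev_eq_cycle_of_list:
  "distinct (k # xs) \<Longrightarrow> star_prod k (rev xs) = cycle_of_list (k # xs)"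
  by (induction xs rule: rev_induct) (simp_all add: cycle_of_list_snoc)

lemma star_facts_single_cycle:
  assumes k: "k \<in> {1..n}" and p: "p permutes {1..n}" and orb: "orbit p k = {1..n}"
  shows "rev (tl (support p k)) \<in> star_facts n k p"
proof -
  have perm: "permutation p" using p by (auto simp: permutation_permutes)
  define xs where "xs = tl (support p k)"
  have supp: "support p k = k # xs"
    using least_power_of_permutation(2)[OF perm, of k] by (simp add: xs_def upt_conv_Cons)
  have dist: "distinct (k # xs)" using cycle_of_permutation[OF perm, of k] supp by simp
  have "set (support p k) = orbit p k"
    unfolding support_set[OF perm] orbit_altdef_permutation[OF perm] by auto
  then have set_supp: "set (k # xs) = {1..n}" using orb supp by simp
  have "p = cycle_of_list (k # xs)"
  proof
    fix x show "p x = cycle_of_list (k # xs) x"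
    proof (cases "x \<in> {1..n}")
      case True
      then have "x \<in> set (support p k)" using supp set_supp by simp
      then show ?thesis using cycle_restrict[OF perm] supp by metis
    next
      case False
      then have "x \<notin> set (k # xs)" using set_supp by blast
      then show ?thesis using permutes_not_in[OF p False] id_outside_supp by metis
    qed
  qed
  then have prod: "star_prod k (rev xs) = p" using star_prod_rev_eq_cycle_of_list[OF dist] by simp
  have "cycles_of n p = {{1..n}}"
    unfolding cycles_of_eq_orbits[OF p] using orbit_eq_of_mem[OF perm] orb k by auto
  then have "num_cycles n p = 1" by (simp add: num_cycles_def)
  moreover have "length (k # xs) = n" using distinct_card[OF dist] set_supp by simp
  moreover have "set (rev xs) = {1..n} - {k}" using dist set_supp by auto
  ultimately show ?thesis using prod by (simp add: star_facts_iff[OF k] xs_def)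
qed

lemma star_facts_nonempty:
  assumes k: "k \<in> {1..n}" and p: "p permutes {1..n}"
  shows "star_facts n k p \<noteq> {}"
  using p
proof (induction "num_cycles n p" arbitrary: p rule: less_induct)
  case less
  show ?case
  proof (cases "orbit p k = {1..n}")
    case True then show ?thesis using star_facts_single_cycle[OF k less.prems] by blast
  next
    case False
    \<comment> \<open>merge another cycle into the one of the pivot and reinsert the transposition\<close>
    then obtain x where x: "x \<in> {1..n}" "x \<notin> orbit p k"
      using permutes_orbit_subset[OF less.prems k] by blast
    have perm: "permutation p" using less.prems by (auto simp: permutation_permutes)
    have kx: "k \<noteq> x" using x(2) permutation_self_in_orbit[OF perm] by blast
    define \<sigma> where "\<sigma> = p \<circ> transpose k x"
    have \<sigma>: "\<sigma> permutes {1..n}"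
      unfolding \<sigma>_def using less.prems k x(1) by (intro permutes_compose permutes_swap_id)
    have cyc: "num_cycles n p = num_cycles n \<sigma> + 1"
      unfolding \<sigma>_def using num_cycles_comp_transpose_merge[OF less.prems k x(1) kx x(2)] .
    then obtain \<gamma> where \<gamma>: "\<gamma> \<in> star_facts n k \<sigma>" using less.hyps[OF _ \<sigma>] by fastforce
    have p_eq: "\<sigma> \<circ> transpose k x = p"
      unfolding \<sigma>_def by (simp only: comp_assoc transpose_comp_involutory comp_id)
    show ?thesis using star_facts_insert[OF k \<gamma> k x(1) kx] cyc unfolding p_eq by auto
  qed
qed


section \<open>Cover relations\<close>

lemma star_covers_imp_comp_transpose:
  assumes k: "k \<in> {1..n}" and cov: "star_covers n k \<sigma> \<tau>"
  shows "\<exists>a\<in>{1..n}. \<exists>b\<in>{1..n}. a \<noteq> b \<and> \<tau> = \<sigma> \<circ> transpose a b \<and>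
           num_cycles n \<tau> = num_cycles n \<sigma> + 1"
proof -
  obtain \<gamma> \<delta> where \<gamma>: "\<gamma> \<in> star_facts n k \<sigma>" and \<delta>: "\<delta> \<in> star_facts n k \<tau>"
    and sub: "subseq \<gamma> \<delta>" and ne: "\<sigma> \<noteq> \<tau>" and \<tau>: "\<tau> permutes {1..n}"
    using cov unfolding star_covers_def star_le_def by blast
  have "star_prod k \<gamma> = \<sigma>" "star_prod k \<delta> = \<tau>" "set \<gamma> = {1..n} - {k}"
    using \<gamma> \<delta> by (simp_all add: star_facts_def)
  then obtain a b \<delta>' where ab: "a \<in> {1..n}" "b \<in> {1..n}" "a \<noteq> b"
    and cyc: "num_cycles n \<tau> = num_cycles n (\<tau> \<circ> transpose a b) + 1"
    and \<delta>': "\<delta>' \<in> star_facts n k (\<tau> \<circ> transpose a b)" "subseq \<gamma> \<delta>'" "subseq \<delta>' \<delta>"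
    using star_facts_delete[OF k \<delta> _ sub] ne by metis
  define \<rho> where "\<rho> = \<tau> \<circ> transpose a b"
  have "\<rho> permutes {1..n}" unfolding \<rho>_def using \<tau> ab by (intro permutes_compose permutes_swap_id)
  moreover have "star_le n k \<sigma> \<rho>" "star_le n k \<rho> \<tau>"
    unfolding star_le_def \<rho>_def using \<gamma> \<delta> \<delta>' by blast+
  moreover have "\<rho> \<noteq> \<tau>" using cyc by (auto simp: \<rho>_def)
  ultimately have "\<sigma> = \<rho>" using cov unfolding star_covers_def by blast
  then have "\<tau> = \<sigma> \<circ> transpose a b" "num_cycles n \<tau> = num_cycles n \<sigma> + 1"
    unfolding \<rho>_def using cyc by (simp_all only: comp_assoc transpose_comp_involutory comp_id)
  then show ?thesis using ab by blast
qed

lemma star_covers_comp_transpose: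
  assumes k: "k \<in> {1..n}" and \<sigma>: "\<sigma> permutes {1..n}" and ab: "a \<in> {1..n}" "b \<in> {1..n}" "a \<noteq> b"
    and cyc: "num_cycles n (\<sigma> \<circ> transpose a b) = num_cycles n \<sigma> + 1"
  shows "star_covers n k \<sigma> (\<sigma> \<circ> transpose a b)"
proof -
  define \<tau> where "\<tau> = \<sigma> \<circ> transpose a b"
  have \<tau>: "\<tau> permutes {1..n}" unfolding \<tau>_def using \<sigma> ab by (intro permutes_compose permutes_swap_id)
  obtain \<gamma> where \<gamma>: "\<gamma> \<in> star_facts n k \<sigma>" using star_facts_nonempty[OF k \<sigma>] by blast
  have "star_le n k \<sigma> \<tau>"
    using star_facts_insert[OF k \<gamma> ab cyc] \<gamma> unfolding \<tau>_def star_le_def by auto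
  moreover have "\<sigma> \<noteq> \<tau>" using cyc by (auto simp: \<tau>_def)
  moreover have "\<rho> = \<sigma> \<or> \<rho> = \<tau>" if "star_le n k \<sigma> \<rho>" "star_le n k \<rho> \<tau>" for \<rho>
  proof (rule ccontr)
    assume "\<not> (\<rho> = \<sigma> \<or> \<rho> = \<tau>)"
    then have "num_cycles n \<sigma> < num_cycles n \<rho>" "num_cycles n \<rho> < num_cycles n \<tau>"
      using star_le_num_cycles_less[OF k that(1)] star_le_num_cycles_less[OF k that(2)] by auto
    then show False using cyc by (simp add: \<tau>_def)
  qed
  ultimately show ?thesis unfolding star_covers_def \<tau>_def[symmetric] using \<sigma> \<tau> by blast
qed

definition ordered_pairs :: "'a::linorder set \<Rightarrow> ('a \<times> 'a) set" where
  "ordered_pairs A = {(a, b). a \<in> A \<and> b \<in> A \<and> a < b}"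

lemma finite_ordered_pairs: "finite A \<Longrightarrow> finite (ordered_pairs A)"
  by (rule finite_subset[of _ "A \<times> A"]) (auto simp: ordered_pairs_def)

lemma card_ordered_pairs:
  assumes "finite A" shows "card (ordered_pairs A) = card A choose 2"
proof -
  have "bij_betw (\<lambda>(a, b). {a, b}) (ordered_pairs A) {B. B \<subseteq> A \<and> card B = 2}"
  proof (rule bij_betw_imageI)
    show "inj_on (\<lambda>(a, b). {a, b}) (ordered_pairs A)"
      by (auto simp: inj_on_def ordered_pairs_def doubleton_eq_iff)
    show "(\<lambda>(a, b). {a, b}) ` ordered_pairs A = {B. B \<subseteq> A \<and> card B = 2}"
    proof (intro set_eqI iffI)
      fix B assume "B \<in> {B. B \<subseteq> A \<and> card B = 2}"
      then obtain x y where xy: "B = {x, y}" "x \<noteq> y" "B \<subseteq> A" by (auto simp: card_2_iff)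
      show "B \<in> (\<lambda>(a, b). {a, b}) ` ordered_pairs A"
      proof (cases "x < y")
        case True then show ?thesis using xy by (intro image_eqI[of _ _ "(x, y)"]) (auto simp: ordered_pairs_def)
      next
        case False then have "y < x" using xy by simp
        then show ?thesis using xy by (intro image_eqI[of _ _ "(y, x)"]) (auto simp: ordered_pairs_def)
      qed
    qed (auto simp: ordered_pairs_def)
  qed
  then have "card (ordered_pairs A) = card {B. B \<subseteq> A \<and> card B = 2}" by (rule bij_betw_same_card)
  also have "\<dots> = card A choose 2" using n_subsets[OF assms] .
  finally show ?thesis .
qed

lemma ex_ordered_pair_iff:
  fixes P :: "'a::linorder \<Rightarrow> 'a \<Rightarrow> bool"
  assumes sym: "\<And>a b. P a b \<longleftrightarrow> P b a"
  shows "(\<exists>a\<in>A. \<exists>b\<in>A. a \<noteq> b \<and> P a b) \<longleftrightarrow> (\<exists>(a, b)\<in>ordered_pairs A. P a b)"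
proof
  assume "\<exists>a\<in>A. \<exists>b\<in>A. a \<noteq> b \<and> P a b"
  then obtain a b where ab: "a \<in> A" "b \<in> A" "a \<noteq> b" "P a b" by blast
  show "\<exists>(a, b)\<in>ordered_pairs A. P a b"
  proof (cases "a < b")
    case True then show ?thesis using ab by (intro bexI[of _ "(a, b)"]) (auto simp: ordered_pairs_def)
  next
    case False then have "b < a" using ab(3) by simp
    then show ?thesis using ab sym[of a b] by (intro bexI[of _ "(b, a)"]) (auto simp: ordered_pairs_def)
  qed
next
  assume "\<exists>(a, b)\<in>ordered_pairs A. P a b"
  then obtain a b where "a \<in> A" "b \<in> A" "a < b" "P a b" by (auto simp: ordered_pairs_def)
  then show "\<exists>a\<in>A. \<exists>b\<in>A. a \<noteq> b \<and> P a b" by (blast dest: less_imp_neq)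
qed

lemma inj_on_comp_transpose_ordered_pairs:
  assumes "inj p" shows "inj_on (\<lambda>(a, b). p \<circ> transpose a b) (ordered_pairs A)"
proof (rule inj_onI, clarify)
  fix a b c d assume ab: "(a, b) \<in> ordered_pairs A" and cd: "(c, d) \<in> ordered_pairs A"
    and eq: "p \<circ> transpose a b = p \<circ> transpose c d"
  have "transpose a b = transpose c d"
    using eq injD[OF assms] by (auto simp: fun_eq_iff)
  then have "transpose c d a = b" by (metis transpose_apply_first)
  then show "a = c \<and> b = d" using ab cd by (auto simp: ordered_pairs_def transpose_eq_iff)
qed

lemma star_covers_above_iff:
  assumes k: "k \<in> {1..n}" and \<pi>: "\<pi> permutes {1..n}"
  shows "star_covers n k \<pi> \<tau> \<longleftrightarrow>
    (\<exists>(a, b)\<in>ordered_pairs {1..n}. b \<in> orbit \<pi> a \<and> \<tau> = \<pi> \<circ> transpose a b)"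
proof -
  have perm: "permutation \<pi>" using \<pi> by (auto simp: permutation_permutes)
  have "star_covers n k \<pi> \<tau> \<longleftrightarrow>
    (\<exists>a\<in>{1..n}. \<exists>b\<in>{1..n}. a \<noteq> b \<and> b \<in> orbit \<pi> a \<and> \<tau> = \<pi> \<circ> transpose a b)"
  proof
    assume "star_covers n k \<pi> \<tau>"
    then obtain a b where ab: "a \<in> {1..n}" "b \<in> {1..n}" "a \<noteq> b" and \<tau>: "\<tau> = \<pi> \<circ> transpose a b"
      and cyc: "num_cycles n \<tau> = num_cycles n \<pi> + 1"
      using star_covers_imp_comp_transpose[OF k] by blast
    have "b \<in> orbit \<pi> a"
      using num_cycles_comp_transpose_merge[OF \<pi> ab] cyc \<tau> by fastforce
    then show "\<exists>a\<in>{1..n}. \<exists>b\<in>{1..n}. a \<noteq> b \<and> b \<in> orbit \<pi> a \<and> \<tau> = \<pi> \<circ> transpose a b"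
      using ab \<tau> by blast
  next
    assume "\<exists>a\<in>{1..n}. \<exists>b\<in>{1..n}. a \<noteq> b \<and> b \<in> orbit \<pi> a \<and> \<tau> = \<pi> \<circ> transpose a b"
    then obtain a b where ab: "a \<in> {1..n}" "b \<in> {1..n}" "a \<noteq> b" "b \<in> orbit \<pi> a"
      and \<tau>: "\<tau> = \<pi> \<circ> transpose a b" by blast
    show "star_covers n k \<pi> \<tau>"
      unfolding \<tau> using star_covers_comp_transpose[OF k \<pi> ab(1-3) num_cycles_comp_transpose_split[OF \<pi> ab]] .
  qed
  also have "\<dots> \<longleftrightarrow> (\<exists>(a, b)\<in>ordered_pairs {1..n}. b \<in> orbit \<pi> a \<and> \<tau> = \<pi> \<circ> transpose a b)"
    by (rule ex_ordered_pair_iff) (metis orbit_sym[OF perm] transpose_commute)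
  finally show ?thesis .
qed

lemma star_covers_below_iff:
  assumes k: "k \<in> {1..n}" and \<pi>: "\<pi> permutes {1..n}"
  shows "star_covers n k \<sigma> \<pi> \<longleftrightarrow>
    (\<exists>(a, b)\<in>ordered_pairs {1..n}. b \<notin> orbit \<pi> a \<and> \<sigma> = \<pi> \<circ> transpose a b)"
proof -
  have perm: "permutation \<pi>" using \<pi> by (auto simp: permutation_permutes)
  have involution: "\<pi> = \<sigma> \<circ> transpose a b \<longleftrightarrow> \<sigma> = \<pi> \<circ> transpose a b" for a b
    by (auto simp: comp_assoc)
  have "star_covers n k \<sigma> \<pi> \<longleftrightarrow>
    (\<exists>a\<in>{1..n}. \<exists>b\<in>{1..n}. a \<noteq> b \<and> b \<notin> orbit \<pi> a \<and> \<sigma> = \<pi> \<circ> transpose a b)"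
  proof
    assume "star_covers n k \<sigma> \<pi>"
    then obtain a b where ab: "a \<in> {1..n}" "b \<in> {1..n}" "a \<noteq> b" and \<sigma>: "\<sigma> = \<pi> \<circ> transpose a b"
      and cyc: "num_cycles n \<pi> = num_cycles n \<sigma> + 1"
      using star_covers_imp_comp_transpose[OF k] involution by blast
    have "b \<notin> orbit \<pi> a"
      using num_cycles_comp_transpose_split[OF \<pi> ab] cyc \<sigma> by fastforce
    then show "\<exists>a\<in>{1..n}. \<exists>b\<in>{1..n}. a \<noteq> b \<and> b \<notin> orbit \<pi> a \<and> \<sigma> = \<pi> \<circ> transpose a b"
      using ab \<sigma> by blast
  next
    assume "\<exists>a\<in>{1..n}. \<exists>b\<in>{1..n}. a \<noteq> b \<and> b \<notin> orbit \<pi> a \<and> \<sigma> = \<pi> \<circ> transpose a b"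
    then obtain a b where ab: "a \<in> {1..n}" "b \<in> {1..n}" "a \<noteq> b" "b \<notin> orbit \<pi> a"
      and \<sigma>: "\<sigma> = \<pi> \<circ> transpose a b" by blast
    have \<sigma>_perm: "\<sigma> permutes {1..n}" unfolding \<sigma> using \<pi> ab by (intro permutes_compose permutes_swap_id)
    have "num_cycles n (\<sigma> \<circ> transpose a b) = num_cycles n \<sigma> + 1"
      using num_cycles_comp_transpose_merge[OF \<pi> ab] involution \<sigma> by metis
    from star_covers_comp_transpose[OF k \<sigma>_perm ab(1-3) this]
    show "star_covers n k \<sigma> \<pi>" using involution \<sigma> by metis
  qed
  also have "\<dots> \<longleftrightarrow> (\<exists>(a, b)\<in>ordered_pairs {1..n}. b \<notin> orbit \<pi> a \<and> \<sigma> = \<pi> \<circ> transpose a b)"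
    by (rule ex_ordered_pair_iff) (metis orbit_sym[OF perm] transpose_commute)
  finally show ?thesis .
qed


section \<open>Counting covers\<close>

lemma same_cycle_ordered_pairs:
  assumes p: "p permutes {1..n}"
  shows "{(a, b) \<in> ordered_pairs {1..n}. b \<in> orbit p a} = (\<Union>C\<in>cycles_of n p. ordered_pairs C)"
proof -
  have perm: "permutation p" using p by (auto simp: permutation_permutes)
  have "(a, b) \<in> ordered_pairs (orbit p x) \<longleftrightarrow> (a, b) \<in> ordered_pairs (orbit p a) \<and> b \<in> orbit p a"
    if "x \<in> {1..n}" "a \<in> orbit p x" for a b x
    using that orbit_eq_of_mem[OF perm] permutation_self_in_orbit[OF perm]
    by (auto simp: ordered_pairs_def)
  then show ?thesis
    using permutes_orbit_subset[OF p] permutation_self_in_orbit[OF perm]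
    by (fastforce simp: cycles_of_eq_orbits[OF p] ordered_pairs_def)
qed

lemma card_same_cycle_ordered_pairs:
  assumes p: "p permutes {1..n}"
  shows "card {(a, b) \<in> ordered_pairs {1..n}. b \<in> orbit p a} = (\<Sum>C\<in>cycles_of n p. card C choose 2)"
proof -
  note fin = finite_cycle[OF p]
  have "card {(a, b) \<in> ordered_pairs {1..n}. b \<in> orbit p a} = card (\<Union>C\<in>cycles_of n p. ordered_pairs C)"
    by (simp only: same_cycle_ordered_pairs[OF p])
  also have "\<dots> = (\<Sum>C\<in>cycles_of n p. card (ordered_pairs C))"
  proof (rule card_UN_disjoint)
    show "finite (cycles_of n p)" by (simp add: cycles_of_def)
    show "\<forall>C\<in>cycles_of n p. finite (ordered_pairs C)" using fin finite_ordered_pairs by blast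
    show "\<forall>C\<in>cycles_of n p. \<forall>C'\<in>cycles_of n p. C \<noteq> C' \<longrightarrow> ordered_pairs C \<inter> ordered_pairs C' = {}"
      using cycles_of_disjoint[OF p] by (fastforce simp: ordered_pairs_def)
  qed
  also have "\<dots> = (\<Sum>C\<in>cycles_of n p. card C choose 2)"
    using fin by (intro sum.cong refl card_ordered_pairs)
  finally show ?thesis .
qed

lemma card_star_covers_above:
  assumes k: "k \<in> {1..n}" and \<pi>: "\<pi> permutes {1..n}"
  shows "card {\<tau>. star_covers n k \<pi> \<tau>} = (\<Sum>C\<in>cycles_of n \<pi>. card C choose 2)"
proof -
  define f where "f = (\<lambda>(a, b). \<pi> \<circ> transpose a b)"
  define SP where "SP = {(a, b) \<in> ordered_pairs {1..n}. b \<in> orbit \<pi> a}"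
  have "{\<tau>. star_covers n k \<pi> \<tau>} = f ` SP"
    unfolding star_covers_above_iff[OF k \<pi>] f_def SP_def by fast
  moreover have "inj_on f SP"
    unfolding f_def using inj_on_comp_transpose_ordered_pairs[OF permutes_inj[OF \<pi>]]
    by (rule inj_on_subset) (auto simp: SP_def)
  ultimately show ?thesis
    using card_same_cycle_ordered_pairs[OF \<pi>] by (simp add: card_image SP_def)
qed

lemma card_star_covers_below:
  assumes k: "k \<in> {1..n}" and \<pi>: "\<pi> permutes {1..n}"
  shows "card {\<sigma>. star_covers n k \<sigma> \<pi>} = (n choose 2) - (\<Sum>C\<in>cycles_of n \<pi>. card C choose 2)"
proof -
  define f where "f = (\<lambda>(a, b). \<pi> \<circ> transpose a b)"
  define SP where "SP = {(a, b) \<in> ordered_pairs {1..n}. b \<in> orbit \<pi> a}"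
  have "{\<sigma>. star_covers n k \<sigma> \<pi>} = f ` (ordered_pairs {1..n} - SP)"
    unfolding star_covers_below_iff[OF k \<pi>] f_def SP_def by fast
  moreover have "inj_on f (ordered_pairs {1..n} - SP)"
    unfolding f_def using inj_on_comp_transpose_ordered_pairs[OF permutes_inj[OF \<pi>]]
    by (rule inj_on_subset) auto
  moreover have "card (ordered_pairs {1..n} - SP) = (n choose 2) - card SP"
  proof -
    have "SP \<subseteq> ordered_pairs {1..n}" by (auto simp: SP_def)
    moreover have "finite (ordered_pairs {1..n::nat})" by (simp add: finite_ordered_pairs)
    ultimately show ?thesis by (simp add: card_Diff_subset finite_subset card_ordered_pairs)
  qed
  ultimately show ?thesis
    using card_same_cycle_ordered_pairs[OF \<pi>] by (simp add: card_image SP_def)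
qed

lemma choose_two_add: "(a + b) choose 2 = (a choose 2) + (b choose 2) + a * (b::nat)"
  by (induction b) (auto simp: numeral_2_eq_2 algebra_simps)

lemma sum_pairs_choose_two:
  "(\<Sum>j<length ls. \<Sum>i<j. ls ! i * ls ! j) + (\<Sum>i<length ls. ls ! i choose 2) = sum_list ls choose 2"
proof (induction ls rule: rev_induct)
  case (snoc x ls)
  have "(\<Sum>i<length ls. ls ! i * x) = sum_list ls * x"
    by (simp add: sum_list_sum_nth atLeast0LessThan sum_distrib_right)
  then show ?case using snoc choose_two_add[of "sum_list ls" x] by (simp add: nth_append)
qed simp

lemma sum_nth_eq_sum_mset_set:
  assumes "mset ls = image_mset g (mset_set A)"
  shows "(\<Sum>i<length ls. f (ls ! i)) = (\<Sum>x\<in>A. f (g x))"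
proof -
  have "(\<Sum>i<length ls. f (ls ! i)) = sum_list (map f ls)"
    by (simp add: sum_list_sum_nth atLeast0LessThan)
  also have "\<dots> = sum_mset (image_mset f (mset ls))" by (simp flip: sum_mset_sum_list)
  also have "\<dots> = (\<Sum>x\<in>A. f (g x))"
    using assms by (simp add: multiset.map_comp comp_def sum_unfold_sum_mset)
  finally show ?thesis .
qed

theorem mainTheorem13:
  fixes n k :: nat and \<pi> :: "nat \<Rightarrow> nat" and ls :: "nat list"
  assumes "\<pi> permutes {1..n}"
    and "k \<in> {1..n}"
    and "mset ls = image_mset card (mset_set (cycles_of n \<pi>))"
  shows "card {\<sigma>. star_covers n k \<sigma> \<pi>} = (\<Sum>j<length ls. \<Sum>i<j. ls ! i * ls ! j)
       \<and> card {\<tau>. star_covers n k \<pi> \<tau>} = (\<Sum>i<length ls. ls ! i choose 2)"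
proof -
  note over_cycles = sum_nth_eq_sum_mset_set[OF assms(3)]
  have "sum_list ls = n"
    using over_cycles[of id] sum_card_cycles_of[OF assms(1)]
    by (simp add: sum_list_sum_nth atLeast0LessThan)
  then have "(\<Sum>j<length ls. \<Sum>i<j. ls ! i * ls ! j) + (\<Sum>C\<in>cycles_of n \<pi>. card C choose 2)
      = n choose 2"
    using sum_pairs_choose_two[of ls] over_cycles[of "\<lambda>l. l choose 2"] by simp
  then show ?thesis
    using card_star_covers_below[OF assms(2,1)] card_star_covers_above[OF assms(2,1)]
      over_cycles[of "\<lambda>l. l choose 2"] by simp
qed

end
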